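(* Let $n\in\mathbb{N}$, let $\chi$ be a red-blue colouring of $E(K_n)$, and let $P$ be a blue path in $K_n$. Let $Y=[n]\setminus V(P)$ and let $Y_0$ be the set of vertices $y\in Y$ such that no edge between $y$ and a vertex of $V(P)$ is blue. Then $$f(n,\chi)\leq 1+\left\lceil\frac{|Y\setminus Y_0|}{2}\right\rceil+|Y_0|<2+\frac{|Y|}{2}+\frac{|Y_0|}{2}.$$
   Context: $K_n$ is the complete graph on vertex set $[n]=\{1,\dots,n\}$. For a red-blue colouring $\chi$ of $E(K_n)$, $f(n,\chi)$ is the smallest size of a family of monochromatic paths, all of the same colour, whose union covers $[n]$; here paths may have length zero (a single vertex) and need not be disjoint. A blue path is one all of whose edges are blue. *)

theory Defs
  imports Complex_Main
begin

datatype colour = Red | Blue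

text \<open>A red-blue colouring of E(K_n) on vertex set [n] = {1..n} is a map from
  2-element vertex sets {u,v} to colours; only its values on edges of K_n matter.\<close>

definition mono_path :: "nat \<Rightarrow> (nat set \<Rightarrow> colour) \<Rightarrow> colour \<Rightarrow> nat list \<Rightarrow> bool" where
  "mono_path n \<chi> c p \<longleftrightarrow> p \<noteq> [] \<and> distinct p \<and> set p \<subseteq> {1..n} \<and>
     (\<forall>i. Suc i < length p \<longrightarrow> \<chi> {p ! i, p ! Suc i} = c)"

definition f :: "nat \<Rightarrow> (nat set \<Rightarrow> colour) \<Rightarrow> nat" where
  "f n \<chi> = (LEAST k. \<exists>c F. finite F \<and> card F = k \<and> (\<forall>p\<in>F. mono_path n \<chi> c p)
                         \<and> {1..n} \<subseteq> (\<Union>p\<in>F. set p))"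

end

theory Submission
  imports Defs
begin

text \<open>Every vertex of \<open>Y - Y0\<close> has a blue edge to the path \<open>P\<close>. Two such vertices \<open>y1, y2\<close>,
  attached at positions \<open>i \<le> j\<close> of \<open>P\<close>, lie on the blue path \<open>y1, P!i, \<dots>, P!j, y2\<close>; so pairing
  them up covers \<open>Y - Y0\<close> by \<open>\<lceil>|Y - Y0|/2\<rceil>\<close> blue paths. Together with \<open>P\<close> itself and the
  single vertices of \<open>Y0\<close> this is a blue path cover of \<open>[n]\<close>.\<close>

lemma mono_path_singleton:
  assumes "y \<in> {1..n}"
  shows "mono_path n \<chi> c [y]"
  using assms unfolding mono_path_def by auto

lemma mono_path_take:
  assumes "mono_path n \<chi> c p" "0 < m"
  shows "mono_path n \<chi> c (take m p)"
  using assms unfolding mono_path_def by (auto dest: in_set_takeD)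

lemma mono_path_drop:
  assumes "mono_path n \<chi> c p" "i < length p"
  shows "mono_path n \<chi> c (drop i p)"
  using assms unfolding mono_path_def by (auto dest: in_set_dropD simp: add.commute)

lemma mono_path_append:
  assumes p: "mono_path n \<chi> c p" and q: "mono_path n \<chi> c q"
    and "set p \<inter> set q = {}" and "\<chi> {last p, hd q} = c"
  shows "mono_path n \<chi> c (p @ q)"
  unfolding mono_path_def
proof (intro conjI allI impI)
  show "p @ q \<noteq> []" "distinct (p @ q)" "set (p @ q) \<subseteq> {1..n}"
    using assms by (auto simp: mono_path_def)
  fix k assume k: "Suc k < length (p @ q)"
  have p_edges: "\<And>i. Suc i < length p \<Longrightarrow> \<chi> {p ! i, p ! Suc i} = c"
    and q_edges: "\<And>i. Suc i < length q \<Longrightarrow> \<chi> {q ! i, q ! Suc i} = c"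
    and "p \<noteq> []" "q \<noteq> []" using p q by (auto simp: mono_path_def)
  consider "Suc k < length p" | "Suc k = length p" | "length p \<le> k" by linarith
  then show "\<chi> {(p @ q) ! k, (p @ q) ! Suc k} = c"
  proof cases
    case 1
    then show ?thesis using p_edges by (simp add: nth_append)
  next
    case 2
    then have "p ! k = last p" "q ! 0 = hd q"
      using \<open>p \<noteq> []\<close> \<open>q \<noteq> []\<close> by (metis diff_Suc_1 last_conv_nth, simp add: hd_conv_nth)
    then show ?thesis using 2 assms(4) by (simp add: nth_append)
  next
    case 3
    then obtain d where "k = length p + d" using le_Suc_ex by blast
    then show ?thesis using k q_edges by (simp add: nth_append)
  qed
qed

lemma mono_path_segment:
  assumes "mono_path n \<chi> c p" "i \<le> j" "j < length p"
  shows "mono_path n \<chi> c (drop i (take (Suc j) p))"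
    and "hd (drop i (take (Suc j) p)) = p ! i"
    and "last (drop i (take (Suc j) p)) = p ! j"
    and "set (drop i (take (Suc j) p)) \<subseteq> set p"
proof -
  show "mono_path n \<chi> c (drop i (take (Suc j) p))"
    using assms by (intro mono_path_drop mono_path_take) auto
  show "hd (drop i (take (Suc j) p)) = p ! i"
    using assms by (simp add: hd_drop_conv_nth)
  show "last (drop i (take (Suc j) p)) = p ! j"
    using assms by (simp add: last_drop take_Suc_conv_app_nth)
  show "set (drop i (take (Suc j) p)) \<subseteq> set p"
    by (meson in_set_dropD in_set_takeD subsetI)
qed

lemma mono_path_through_attached_ordered:
  assumes p: "mono_path n \<chi> c p"
    and y: "y1 \<in> {1..n} - set p" "y2 \<in> {1..n} - set p" "y1 \<noteq> y2"
    and ij: "i \<le> j" "j < length p"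
    and edges: "\<chi> {y1, p ! i} = c" "\<chi> {y2, p ! j} = c"
  shows "\<exists>q. mono_path n \<chi> c q \<and> y1 \<in> set q \<and> y2 \<in> set q"
proof -
  define s where "s = drop i (take (Suc j) p)"
  note seg = mono_path_segment[OF p ij, folded s_def]
  have "mono_path n \<chi> c ([y1] @ s)"
    using y edges seg by (intro mono_path_append mono_path_singleton) auto
  moreover have "last ([y1] @ s) = p ! j"
    using seg by (simp add: mono_path_def)
  ultimately have "mono_path n \<chi> c (([y1] @ s) @ [y2])"
    using y edges seg by (intro mono_path_append mono_path_singleton) (auto simp: insert_commute)
  then show ?thesis by fastforce
qed

lemma mono_path_through_attached:
  assumes p: "mono_path n \<chi> c p"
    and y: "y1 \<in> {1..n} - set p" "y2 \<in> {1..n} - set p" "y1 \<noteq> y2"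
    and v: "v1 \<in> set p" "v2 \<in> set p"
    and edges: "\<chi> {y1, v1} = c" "\<chi> {y2, v2} = c"
  shows "\<exists>q. mono_path n \<chi> c q \<and> y1 \<in> set q \<and> y2 \<in> set q"
proof -
  obtain i j where ij: "i < length p" "v1 = p ! i" "j < length p" "v2 = p ! j"
    using v by (auto simp: in_set_conv_nth)
  show ?thesis
  proof (cases "i \<le> j")
    case True
    then show ?thesis
      using mono_path_through_attached_ordered[OF p y True ij(3)] ij edges by simp
  next
    case False
    then have "j \<le> i" by simp
    then have "\<exists>q. mono_path n \<chi> c q \<and> y2 \<in> set q \<and> y1 \<in> set q"
      using mono_path_through_attached_ordered[OF p y(2,1) y(3)[symmetric] _ ij(1)] ij edges by simp
    then show ?thesis by blast
  qed
qed

lemma pairwise_joinable_cover: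
  fixes S :: "'a set" and good :: "'a list \<Rightarrow> bool"
  assumes "finite S"
    and "\<And>x. x \<in> S \<Longrightarrow> good [x]"
    and "\<And>x y. x \<in> S \<Longrightarrow> y \<in> S \<Longrightarrow> x \<noteq> y \<Longrightarrow> \<exists>q. good q \<and> x \<in> set q \<and> y \<in> set q"
  shows "\<exists>F. finite F \<and> 2 * card F \<le> card S + 1 \<and> (\<forall>q\<in>F. good q) \<and> S \<subseteq> (\<Union>q\<in>F. set q)"
  using assms
proof (induction "card S" arbitrary: S rule: less_induct)
  case less
  consider "S = {}" | x where "S = {x}" | x y where "x \<in> S" "y \<in> S" "x \<noteq> y"
    by (metis all_not_in_conv is_singletonI' is_singleton_the_elem)
  then show ?case
  proof cases
    case 1
    then show ?thesis by (intro exI[of _ "{}"]) auto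
  next
    case (2 x)
    then show ?thesis using less.prems by (intro exI[of _ "{[x]}"]) auto
  next
    case (3 x y)
    then have smaller: "card (S - {x, y}) < card S"
      using less.prems(1) by (intro psubset_card_mono) auto
    have "card {x, y} \<le> card S"
      using 3 less.prems(1) by (intro card_mono) auto
    then have card_rest: "card (S - {x, y}) + 2 = card S"
      using 3 less.prems(1) by (subst card_Diff_subset) auto
    obtain F where F: "finite F" "2 * card F \<le> card (S - {x, y}) + 1"
      "\<forall>q\<in>F. good q" "S - {x, y} \<subseteq> (\<Union>q\<in>F. set q)"
      using less.hyps[OF smaller] less.prems by auto
    obtain q where "good q" "x \<in> set q" "y \<in> set q"
      using less.prems(3) 3 by blast
    moreover have "card (insert q F) \<le> card F + 1"
      using F(1) by (simp add: card_insert_if)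
    ultimately show ?thesis
      using F card_rest by (intro exI[of _ "insert q F"]) auto
  qed
qed

lemma cover_attached_vertices:
  assumes p: "mono_path n \<chi> c p"
    and S: "S \<subseteq> {1..n} - set p"
    and attached: "\<forall>y\<in>S. \<exists>v\<in>set p. \<chi> {y, v} = c"
  shows "\<exists>F. finite F \<and> 2 * card F \<le> card S + 1 \<and> (\<forall>q\<in>F. mono_path n \<chi> c q)
    \<and> S \<subseteq> (\<Union>q\<in>F. set q)"
proof (rule pairwise_joinable_cover)
  show "finite S" using S finite_subset by blast
  show "mono_path n \<chi> c [x]" if "x \<in> S" for x
    using S that by (intro mono_path_singleton) blast
  show "\<exists>q. mono_path n \<chi> c q \<and> x \<in> set q \<and> y \<in> set q"
    if xy: "x \<in> S" "y \<in> S" "x \<noteq> y" for x y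
  proof -
    obtain u v where uv: "u \<in> set p" "v \<in> set p" "\<chi> {x, u} = c" "\<chi> {y, v} = c"
      using attached xy(1,2) by meson
    have "x \<in> {1..n} - set p" "y \<in> {1..n} - set p"
      using S xy(1,2) by auto
    then show ?thesis
      using mono_path_through_attached[OF p _ _ xy(3) uv] by simp
  qed
qed

lemma f_le_card:
  assumes "finite F" "\<forall>q\<in>F. mono_path n \<chi> c q" "{1..n} \<subseteq> (\<Union>q\<in>F. set q)"
  shows "f n \<chi> \<le> card F"
  unfolding f_def by (rule Least_le) (use assms in blast)

lemma f_le_card_add_card:
  assumes "finite F" "\<forall>q\<in>F. mono_path n \<chi> c q"
    and "Z \<subseteq> {1..n}" "{1..n} \<subseteq> (\<Union>q\<in>F. set q) \<union> Z"
  shows "f n \<chi> \<le> card F + card Z"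
proof -
  define G where "G = F \<union> (\<lambda>z. [z]) ` Z"
  have "finite Z" using assms(3) finite_subset by blast
  then have "f n \<chi> \<le> card G"
    using assms unfolding G_def by (intro f_le_card) (auto intro!: mono_path_singleton)
  also have "\<dots> \<le> card F + card ((\<lambda>z. [z]) ` Z)"
    unfolding G_def by (rule card_Un_le)
  also have "\<dots> \<le> card F + card Z"
    using card_image_le[OF \<open>finite Z\<close>] by simp
  finally show ?thesis .
qed

lemma le_ceiling_half_of_nat:
  assumes "2 * m \<le> a + 1"
  shows "real m \<le> real_of_int \<lceil>real a / 2\<rceil>"
proof -
  have "real (2 * m) \<le> real (a + 1)"
    using assms by (simp only: of_nat_le_iff)
  then have "int m \<le> \<lceil>real a / 2\<rceil>"
    unfolding le_ceiling_iff by simp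
  then show ?thesis by linarith
qed

theorem lemma3p3:
  fixes n :: nat and \<chi> :: "nat set \<Rightarrow> colour" and P :: "nat list"
  assumes "mono_path n \<chi> Blue P"
  defines "Y \<equiv> {1..n} - set P"
  defines "Y0 \<equiv> {y \<in> Y. \<forall>v \<in> set P. \<chi> {y, v} \<noteq> Blue}"
  shows "real (f n \<chi>) \<le> 1 + real_of_int \<lceil>real (card (Y - Y0)) / 2\<rceil> + real (card Y0)
       \<and> 1 + real_of_int \<lceil>real (card (Y - Y0)) / 2\<rceil> + real (card Y0)
           < 2 + real (card Y) / 2 + real (card Y0) / 2"
proof -
  have attached: "Y - Y0 \<subseteq> {1..n} - set P" "\<forall>y\<in>Y - Y0. \<exists>v\<in>set P. \<chi> {y, v} = Blue"
    unfolding Y_def Y0_def by auto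
  obtain F where F: "finite F" "2 * card F \<le> card (Y - Y0) + 1"
    "\<forall>q\<in>F. mono_path n \<chi> Blue q" "Y - Y0 \<subseteq> (\<Union>q\<in>F. set q)"
    using cover_attached_vertices[OF assms(1) attached] by blast
  have "Y0 \<subseteq> {1..n}" "{1..n} \<subseteq> (\<Union>q\<in>insert P F. set q) \<union> Y0"
    using F(4) unfolding Y_def Y0_def by blast+
  then have "f n \<chi> \<le> card (insert P F) + card Y0"
    using F(1,3) assms(1) by (intro f_le_card_add_card) simp_all
  also have "\<dots> \<le> 1 + card F + card Y0"
    using F(1) by (simp add: card_insert_if)
  finally have bound: "real (f n \<chi>) \<le> 1 + real (card F) + real (card Y0)"
    by linarith
  have "finite Y" "Y0 \<subseteq> Y"
    unfolding Y_def Y0_def by auto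
  then have "real (card Y) = real (card (Y - Y0)) + real (card Y0)"
    using card_Int_Diff[of Y Y0] by (simp add: Int_absorb1)
  then show ?thesis
    using bound le_ceiling_half_of_nat[OF F(2)] ceiling_correct[of "real (card (Y - Y0)) / 2"]
    by linarith
qed

end
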